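(* Let $3\le t\le w<n$ and suppose a Steiner system $S(t,w,n)$ exists. Then $$q'_0(t,w,n)\le \frac{\binom{n-1}{t-1}}{\binom{w-1}{t-1}}-\frac{\binom{n-t+2}{2}}{\binom{w-t+2}{2}}+\min_{S}\ \max_{D\in S'}\ \chi(D)+1,$$ where the minimum is over all Steiner systems $S$ of type $S(t,w,n)$ and $S'$ is the set of all $S(2,w-t+2,n-t+2)$ systems derived from $S$ (by removing a $(t-2)$-subset of points).
   Context: $\mathbb{Z}_q=\{0,\dots,q-1\}$ (an alphabet); $\mathrm{wt}$ = number of nonzero coordinates; $d$ = Hamming distance; $J_q(n,w)$ = weight-$w$ words of $\mathbb{Z}_q^n$. An $(n,w,d)_q$ code of size $M$ is a subset $C\subseteq J_q(n,w)$ with $|C|=M$ and pairwise distances at least $d$. A Steiner system $S(t,k,n)$ is a pair $(N,B)$, $|N|=n$, $B$ a set of $k$-subsets (blocks) of $N$ with every $t$-subset of $N$ in exactly one block. For $\alpha\subset N$ with $0<|\alpha|<t$, the derived system is $(N\setminus\alpha,\{\beta\setminus\alpha:\alpha\subseteq\beta\in B\})$, an $S(t-|\alpha|,k-|\alpha|,n-|\alpha|)$. For an $S(2,k,n)$ system $D$, $\chi(D)$ is the minimum number of classes in a partition of its blocks such that distinct blocks in the same class are disjoint. For $t,k,n$ such that an $S(t,k,n)$ exists, $q'_0(t,k,n)$ is the smallest $q$ for which an $(n,k,2k-t+1)_q$ code of size $\binom{n}{t}/\binom{k}{t}$ exists. *)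

theory Defs
  imports Complex_Main "HOL-Library.Disjoint_Sets"
begin

definition wt :: "nat list \<Rightarrow> nat" where
  "wt x = card {i. i < length x \<and> x ! i \<noteq> 0}"

definition hdist :: "nat list \<Rightarrow> nat list \<Rightarrow> nat" where
  "hdist x y = card {i. i < length x \<and> x ! i \<noteq> y ! i}"

definition J :: "nat \<Rightarrow> nat \<Rightarrow> nat \<Rightarrow> nat list set" where
  "J q n w = {x. length x = n \<and> set x \<subseteq> {0..<q} \<and> wt x = w}"

definition is_code :: "nat \<Rightarrow> nat \<Rightarrow> nat \<Rightarrow> nat \<Rightarrow> nat \<Rightarrow> nat list set \<Rightarrow> bool" where
  "is_code q n w d M C \<longleftrightarrow> C \<subseteq> J q n w \<and> card C = M \<and>
     (\<forall>x\<in>C. \<forall>y\<in>C. x \<noteq> y \<longrightarrow> d \<le> hdist x y)"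

definition steiner_system :: "nat \<Rightarrow> nat \<Rightarrow> nat \<Rightarrow> 'a set \<Rightarrow> 'a set set \<Rightarrow> bool" where
  "steiner_system t k n N B \<longleftrightarrow> finite N \<and> card N = n \<and>
     (\<forall>b\<in>B. b \<subseteq> N \<and> card b = k) \<and>
     (\<forall>T. T \<subseteq> N \<and> card T = t \<longrightarrow> (\<exists>!b. b \<in> B \<and> T \<subseteq> b))"

definition derived_blocks :: "'a set \<Rightarrow> 'a set set \<Rightarrow> 'a set set" where
  "derived_blocks \<alpha> B = {\<beta> - \<alpha> | \<beta>. \<beta> \<in> B \<and> \<alpha> \<subseteq> \<beta>}"

definition chi :: "'a set set \<Rightarrow> nat" where
  "chi B = (LEAST k. \<exists>P. partition_on B P \<and> card P = k \<and>
     (\<forall>c\<in>P. \<forall>b\<in>c. \<forall>b'\<in>c. b \<noteq> b' \<longrightarrow> b \<inter> b' = {}))"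

definition q0' :: "nat \<Rightarrow> nat \<Rightarrow> nat \<Rightarrow> nat" where
  "q0' t k n = (LEAST q. \<exists>C. is_code q n k (2*k - t + 1) ((n choose t) div (k choose t)) C)"

end

theory Submission
  imports Defs "HOL-Number_Theory.Cong"
begin

text \<open>Take a Steiner system realising the minimum and let \<open>M\<close> be the largest chromatic index of its
  derived systems. Choose for every point \<open>i\<close> a \<open>(t-2)\<close>-set \<open>anchor i \<ni> i\<close>, injectively in \<open>i\<close>
  (cyclic windows). A block \<open>b\<close> becomes the word with support \<open>b\<close> whose letter at \<open>i \<in> b\<close> is a
  proper colour of \<open>b - anchor i\<close> in the derived system at \<open>anchor i\<close> when \<open>anchor i \<subseteq> b\<close>, and
  otherwise a letter reserved for \<open>b\<close> among the \<open>R - L\<close> blocks through \<open>i\<close> not containing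
  \<open>anchor i\<close> (\<open>R\<close>, \<open>L\<close> being the numbers of blocks through a point and through a \<open>(t-2)\<close>-set).
  Equal letters of two blocks at \<open>i\<close> force \<open>anchor i = b \<inter> b'\<close>, so by injectivity two blocks
  agree in at most one position, and only if they meet in \<open>t - 2\<close> points. Hence the words are at
  distance at least \<open>2w - t + 1\<close>, over an alphabet of \<open>M + R - L + 1\<close> letters.\<close>

lemma card_supersets_of_card:
  assumes "finite X" "S \<subseteq> X" "card S \<le> k"
  shows "card {T. S \<subseteq> T \<and> T \<subseteq> X \<and> card T = k} = (card X - card S) choose (k - card S)"
proof -
  have "finite S" using assms finite_subset by blast
  have bij: "bij_betw (\<lambda>U. U \<union> S) {U. U \<subseteq> X - S \<and> card U = k - card S}
          {T. S \<subseteq> T \<and> T \<subseteq> X \<and> card T = k}"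
  proof (rule bij_betw_byWitness[where f' = "\<lambda>T. T - S"])
    show "(\<lambda>U. U \<union> S) ` {U. U \<subseteq> X - S \<and> card U = k - card S}
            \<subseteq> {T. S \<subseteq> T \<and> T \<subseteq> X \<and> card T = k}"
    proof (intro image_subsetI CollectI conjI)
      fix U assume U: "U \<in> {U. U \<subseteq> X - S \<and> card U = k - card S}"
      then have "finite U" using assms finite_subset by blast
      with U \<open>finite S\<close> assms show "card (U \<union> S) = k"
        by (subst card_Un_disjoint) auto
    qed (use assms in auto)
    show "(\<lambda>T. T - S) ` {T. S \<subseteq> T \<and> T \<subseteq> X \<and> card T = k}
            \<subseteq> {U. U \<subseteq> X - S \<and> card U = k - card S}"
      using \<open>finite S\<close> by (auto simp: card_Diff_subset)
  qed auto
  have "card {T. S \<subseteq> T \<and> T \<subseteq> X \<and> card T = k} = card (X - S) choose (k - card S)"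
    using assms bij_betw_same_card[OF bij] n_subsets[of "X - S" "k - card S"] by simp
  also have "card (X - S) = card X - card S"
    using assms \<open>finite S\<close> by (simp add: card_Diff_subset)
  finally show ?thesis .
qed

lemma steiner_systemD:
  assumes "steiner_system t k n N B"
  shows "finite N" "card N = n" "b \<in> B \<Longrightarrow> b \<subseteq> N" "b \<in> B \<Longrightarrow> card b = k"
  using assms unfolding steiner_system_def by auto

lemma steiner_system_ex_block:
  assumes "steiner_system t k n N B" "T \<subseteq> N" "card T = t"
  obtains b where "b \<in> B" "T \<subseteq> b"
  using assms unfolding steiner_system_def by auto

lemma steiner_system_block_unique:
  assumes "steiner_system t k n N B" "T \<subseteq> N" "card T = t"
    and "b \<in> B" "b' \<in> B" "T \<subseteq> b" "T \<subseteq> b'"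
  shows "b = b'"
  using assms unfolding steiner_system_def by metis

lemma steiner_system_finite:
  assumes "steiner_system t k n N B"
  shows "finite B"
proof (rule finite_subset)
  show "B \<subseteq> Pow N" using steiner_systemD(3)[OF assms] by blast
  show "finite (Pow N)" using steiner_systemD(1)[OF assms] by simp
qed

lemma steiner_system_card_Int_less:
  assumes st: "steiner_system t k n N B" and "b \<in> B" "b' \<in> B" "b \<noteq> b'"
  shows "card (b \<inter> b') < t"
proof (rule ccontr)
  assume "\<not> card (b \<inter> b') < t"
  then obtain T where T: "T \<subseteq> b \<inter> b'" "card T = t"
    by (meson not_less obtain_subset_with_card_n)
  moreover have "T \<subseteq> N" using T assms steiner_systemD(3)[OF st] by blast
  ultimately show False
    using steiner_system_block_unique[OF st] assms by blast
qed

text \<open>Double counting: each \<open>t\<close>-subset of \<open>N\<close> containing \<open>S\<close> lies in exactly one block.\<close>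
lemma steiner_system_card_blocks_containing:
  assumes st: "steiner_system t k n N B" and S: "S \<subseteq> N" "card S \<le> t"
  shows "card {b\<in>B. S \<subseteq> b} * ((k - card S) choose (t - card S)) = (n - card S) choose (t - card S)"
proof -
  define F where "F b = {T. S \<subseteq> T \<and> T \<subseteq> b \<and> card T = t}" for b
  have fin_block: "finite b" if "b \<in> B" for b
    using that finite_subset steiner_systemD(1,3)[OF st] by blast
  have "card {T. S \<subseteq> T \<and> T \<subseteq> N \<and> card T = t} = card (\<Union>b\<in>{b\<in>B. S \<subseteq> b}. F b)"
  proof (rule arg_cong[where f = card], intro equalityI subsetI)
    fix T assume T: "T \<in> {T. S \<subseteq> T \<and> T \<subseteq> N \<and> card T = t}"
    then obtain b where "b \<in> B" "T \<subseteq> b" using steiner_system_ex_block[OF st] by auto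
    with T show "T \<in> (\<Union>b\<in>{b\<in>B. S \<subseteq> b}. F b)" unfolding F_def by auto
  qed (use steiner_systemD(3)[OF st] in \<open>fastforce simp: F_def\<close>)
  also have "\<dots> = (\<Sum>b\<in>{b\<in>B. S \<subseteq> b}. card (F b))"
  proof (rule card_UN_disjoint)
    show "finite {b\<in>B. S \<subseteq> b}" using steiner_system_finite[OF st] by simp
    show "\<forall>b\<in>{b\<in>B. S \<subseteq> b}. finite (F b)"
    proof
      fix b assume "b \<in> {b\<in>B. S \<subseteq> b}"
      then have "finite (Pow b)" using fin_block by simp
      moreover have "F b \<subseteq> Pow b" unfolding F_def by blast
      ultimately show "finite (F b)" by (rule rev_finite_subset)
    qed
    show "\<forall>b\<in>{b\<in>B. S \<subseteq> b}. \<forall>b'\<in>{b\<in>B. S \<subseteq> b}. b \<noteq> b' \<longrightarrow> F b \<inter> F b' = {}"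
    proof (intro ballI impI)
      fix b b' assume "b \<in> {b\<in>B. S \<subseteq> b}" "b' \<in> {b\<in>B. S \<subseteq> b}" "b \<noteq> b'"
      then have "card (b \<inter> b') < t" "finite (b \<inter> b')"
        using steiner_system_card_Int_less[OF st] fin_block by auto
      then have "\<not> (T \<subseteq> b \<inter> b' \<and> card T = t)" for T
        using card_mono[of "b \<inter> b'" T] by auto
      then show "F b \<inter> F b' = {}"
        unfolding F_def by blast
    qed
  qed
  also have "\<dots> = (\<Sum>b\<in>{b\<in>B. S \<subseteq> b}. (k - card S) choose (t - card S))"
    using card_supersets_of_card[OF fin_block] S steiner_systemD(4)[OF st] unfolding F_def
    by (intro sum.cong) auto
  finally show ?thesis
    using card_supersets_of_card[OF steiner_systemD(1)[OF st] S] steiner_systemD(2)[OF st]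
    by simp
qed

lemma steiner_system_card_blocks_containing_div:
  assumes "steiner_system t k n N B" "S \<subseteq> N" "card S \<le> t" "t \<le> k"
  shows "card {b\<in>B. S \<subseteq> b} = ((n - card S) choose (t - card S)) div ((k - card S) choose (t - card S))"
proof -
  have "0 < (k - card S) choose (t - card S)" using assms(3,4) by simp
  then show ?thesis by (simp flip: steiner_system_card_blocks_containing[OF assms(1-3)])
qed

lemma steiner_system_card_blocks_containing_real:
  assumes "steiner_system t k n N B" "S \<subseteq> N" "card S \<le> t" "t \<le> k"
  shows "real (card {b\<in>B. S \<subseteq> b}) =
    real ((n - card S) choose (t - card S)) / real ((k - card S) choose (t - card S))"
  using steiner_system_card_blocks_containing[OF assms(1-3)] assms(3,4)
  by (simp add: field_simps flip: of_nat_mult)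

lemma steiner_system_card_blocks_through_not_containing:
  assumes st: "steiner_system t k n N B" and "i \<in> A" "A \<subseteq> N" "card A \<le> t" "t \<le> k"
  shows "real (card {b\<in>B. i \<in> b \<and> \<not> A \<subseteq> b}) =
    real ((n - 1) choose (t - 1)) / real ((k - 1) choose (t - 1))
    - real ((n - card A) choose (t - card A)) / real ((k - card A) choose (t - card A))"
proof -
  have "finite A" using assms steiner_systemD(1)[OF st] finite_subset by blast
  then have "1 \<le> card A" using assms card_0_eq by fastforce
  have sub: "{b\<in>B. A \<subseteq> b} \<subseteq> {b\<in>B. {i} \<subseteq> b}" using assms by blast
  have "{b\<in>B. i \<in> b \<and> \<not> A \<subseteq> b} = {b\<in>B. {i} \<subseteq> b} - {b\<in>B. A \<subseteq> b}" by blast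
  then have "real (card {b\<in>B. i \<in> b \<and> \<not> A \<subseteq> b}) =
      real (card {b\<in>B. {i} \<subseteq> b}) - real (card {b\<in>B. A \<subseteq> b})"
    using card_Diff_subset[OF _ sub] card_mono[OF _ sub] steiner_system_finite[OF st]
    by (simp add: of_nat_diff)
  moreover have "real (card {b\<in>B. {i} \<subseteq> b}) =
      real ((n - 1) choose (t - 1)) / real ((k - 1) choose (t - 1))"
    using steiner_system_card_blocks_containing_real[OF st, of "{i}"] assms \<open>1 \<le> card A\<close>
    by (simp add: subset_iff)
  ultimately show ?thesis
    using steiner_system_card_blocks_containing_real[OF st assms(3-5)] by simp
qed

lemma chi_coloring:
  assumes "finite D"
  shows "\<exists>col. (\<forall>x\<in>D. col x < chi D) \<and>
    (\<forall>x\<in>D. \<forall>y\<in>D. x \<noteq> y \<longrightarrow> col x = col y \<longrightarrow> x \<inter> y = {})"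
proof -
  have "\<exists>P. partition_on D P \<and> card P = chi D \<and>
      (\<forall>c\<in>P. \<forall>b\<in>c. \<forall>b'\<in>c. b \<noteq> b' \<longrightarrow> b \<inter> b' = {})"
    unfolding chi_def by (rule LeastI[of _ "card ((\<lambda>x. {x}) ` D)"]) (auto intro: partition_on_singletons)
  then obtain P where P: "partition_on D P" "card P = chi D"
    and classes: "\<forall>c\<in>P. \<forall>b\<in>c. \<forall>b'\<in>c. b \<noteq> b' \<longrightarrow> b \<inter> b' = {}"
    by blast
  obtain h where h: "bij_betw h P {0..<card P}"
    using ex_bij_betw_finite_nat finite_elements[OF assms P(1)] by blast
  have "\<forall>x\<in>D. \<exists>c. c \<in> P \<and> x \<in> c" using partition_onD1[OF P(1)] by blast
  then obtain cl where cl: "\<forall>x\<in>D. cl x \<in> P \<and> x \<in> cl x" by metis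
  have "\<forall>x\<in>D. h (cl x) < chi D"
    using cl h P(2) by (auto dest: bij_betwE)
  moreover have "x \<inter> y = {}" if "x \<in> D" "y \<in> D" "x \<noteq> y" "h (cl x) = h (cl y)" for x y
  proof -
    have "cl x = cl y" using that cl inj_onD[OF bij_betw_imp_inj_on[OF h]] by blast
    then show ?thesis using that cl classes by metis
  qed
  ultimately show ?thesis by (intro exI[of _ "h \<circ> cl"]) auto
qed

definition cyclic_window :: "nat \<Rightarrow> nat \<Rightarrow> nat \<Rightarrow> nat set" where
  "cyclic_window n m i = (\<lambda>j. (i + j) mod n) ` {..<m}"

lemma mod_add_left_cancel_less:
  fixes i x y n :: nat
  assumes "(i + x) mod n = (i + y) mod n" "x < n" "y < n"
  shows "x = y"
proof -
  have "[i + x = i + y] (mod n)" using assms(1) by (simp add: cong_def)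
  then have "[x = y] (mod n)" by (simp add: cong_add_lcancel_nat)
  then show ?thesis using assms(2,3) by (rule cong_less_modulus_unique_nat)
qed

lemma self_in_cyclic_window: "0 < m \<Longrightarrow> i < n \<Longrightarrow> i \<in> cyclic_window n m i"
  unfolding cyclic_window_def by (auto intro!: image_eqI[of _ _ 0])

lemma cyclic_window_subset: "0 < n \<Longrightarrow> cyclic_window n m i \<subseteq> {0..<n}"
  unfolding cyclic_window_def by auto

lemma card_cyclic_window:
  assumes "m \<le> n"
  shows "card (cyclic_window n m i) = m"
proof -
  have "inj_on (\<lambda>j. (i + j) mod n) {..<m}"
  proof (rule inj_onI)
    fix x y assume "x \<in> {..<m}" "y \<in> {..<m}" "(i + x) mod n = (i + y) mod n"
    then show "x = y" using assms mod_add_left_cancel_less[of i x n y] by simp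
  qed
  then show ?thesis unfolding cyclic_window_def by (simp add: card_image)
qed

text \<open>Since \<open>m < n\<close>, the predecessor of \<open>i\<close> lies outside the window starting at \<open>i\<close>; if \<open>i\<close> lay
  at a positive offset of the window starting at \<open>j\<close>, its predecessor would lie in that window.\<close>
lemma inj_on_cyclic_window:
  assumes "0 < m" "m < n"
  shows "inj_on (cyclic_window n m) {0..<n}"
proof (rule inj_onI, rule ccontr)
  fix i j assume ij: "i \<in> {0..<n}" "j \<in> {0..<n}" "cyclic_window n m i = cyclic_window n m j" "i \<noteq> j"
  define pred where "pred = (i + (n - 1)) mod n"
  have outside: "pred \<notin> cyclic_window n m i"
    using assms mod_add_left_cancel_less[of i "n - 1" n] unfolding pred_def cyclic_window_def
    by fastforce
  obtain d where d: "d < m" "i = (j + d) mod n"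
    using self_in_cyclic_window[OF assms(1), of i n] ij unfolding cyclic_window_def by auto
  then have "0 < d" using ij by (cases d) auto
  have "pred = (j + d + (n - 1)) mod n" using d unfolding pred_def by (simp add: mod_add_left_eq)
  also have "j + d + (n - 1) = j + (d - 1) + n" using \<open>0 < d\<close> assms by simp
  finally have "pred = (j + (d - 1)) mod n" by simp
  then have "pred \<in> cyclic_window n m j"
    using d unfolding cyclic_window_def by auto
  with outside ij show False by simp
qed

definition labelled_word :: "nat \<Rightarrow> (nat \<Rightarrow> nat) \<Rightarrow> nat set \<Rightarrow> nat list" where
  "labelled_word n f b = map (\<lambda>i. if i \<in> b then f i else 0) [0..<n]"

lemma length_labelled_word [simp]: "length (labelled_word n f b) = n"
  unfolding labelled_word_def by simp

lemma nth_labelled_word [simp]: "i < n \<Longrightarrow> labelled_word n f b ! i = (if i \<in> b then f i else 0)"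
  unfolding labelled_word_def by simp

lemma support_labelled_word:
  assumes "b \<subseteq> {0..<n}" "\<forall>i\<in>b. f i \<noteq> 0"
  shows "{i. i < length (labelled_word n f b) \<and> labelled_word n f b ! i \<noteq> 0} = b"
  using assms by (auto split: if_splits)

lemma labelled_word_in_J:
  assumes "b \<subseteq> {0..<n}" "\<forall>i\<in>b. 0 < f i \<and> f i < q" "0 < q"
  shows "labelled_word n f b \<in> J q n (card b)"
proof -
  have "set (labelled_word n f b) \<subseteq> {0..<q}"
    using assms unfolding labelled_word_def by auto
  moreover have "wt (labelled_word n f b) = card b"
    unfolding wt_def using support_labelled_word[of b n f] assms by simp
  ultimately show ?thesis unfolding J_def by simp
qed

lemma hdist_labelled_word:
  assumes "b \<subseteq> {0..<n}" "b' \<subseteq> {0..<n}" "\<forall>i\<in>b. f i \<noteq> 0" "\<forall>i\<in>b'. f' i \<noteq> 0"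
  shows "hdist (labelled_word n f b) (labelled_word n f' b') =
    card (b - b') + card (b' - b) + card {i\<in>b \<inter> b'. f i \<noteq> f' i}"
proof -
  have "finite b" "finite b'" using assms(1,2) finite_subset by auto
  have "{i. i < length (labelled_word n f b) \<and> labelled_word n f b ! i \<noteq> labelled_word n f' b' ! i}
      = (b - b') \<union> (b' - b) \<union> {i\<in>b \<inter> b'. f i \<noteq> f' i}"
  proof (intro set_eqI)
    fix i show "i \<in> {i. i < length (labelled_word n f b) \<and> labelled_word n f b ! i \<noteq> labelled_word n f' b' ! i}
      \<longleftrightarrow> i \<in> (b - b') \<union> (b' - b) \<union> {i\<in>b \<inter> b'. f i \<noteq> f' i}"
      using assms by (cases "i < n") auto
  qed
  moreover have "card ((b - b') \<union> (b' - b) \<union> {i\<in>b \<inter> b'. f i \<noteq> f' i})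
      = card ((b - b') \<union> (b' - b)) + card {i\<in>b \<inter> b'. f i \<noteq> f' i}"
    by (rule card_Un_disjoint) (use \<open>finite b\<close> \<open>finite b'\<close> in auto)
  moreover have "card ((b - b') \<union> (b' - b)) = card (b - b') + card (b' - b)"
    by (rule card_Un_disjoint) (use \<open>finite b\<close> \<open>finite b'\<close> in auto)
  ultimately show ?thesis unfolding hdist_def by simp
qed

lemma code_from_labelling:
  fixes B :: "nat set set" and c :: "nat \<Rightarrow> nat set \<Rightarrow> nat"
  assumes blocks: "\<And>b. b \<in> B \<Longrightarrow> b \<subseteq> {0..<n}" "\<And>b. b \<in> B \<Longrightarrow> card b = w"
    and "t \<le> w" "0 < q"
    and labels: "\<And>b i. b \<in> B \<Longrightarrow> i \<in> b \<Longrightarrow> 0 < c i b \<and> c i b < q"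
    and agreements: "\<And>b b'. b \<in> B \<Longrightarrow> b' \<in> B \<Longrightarrow> b \<noteq> b' \<Longrightarrow>
      card {i\<in>b \<inter> b'. c i b = c i b'} + card (b \<inter> b') < t"
  shows "\<exists>C. is_code q n w (2 * w - t + 1) (card B) C"
proof -
  define word where "word b = labelled_word n (\<lambda>i. c i b) b" for b
  have block: "b \<subseteq> {0..<n}" "card b = w" "finite b" if "b \<in> B" for b
    using that blocks by (auto intro: finite_subset[of _ "{0..<n}"])
  have support: "{i. i < length (word b) \<and> word b ! i \<noteq> 0} = b" if "b \<in> B" for b
    unfolding word_def using support_labelled_word block labels that by auto
  have "inj_on word B"
    by (rule inj_onI) (metis support)
  moreover have "word b \<in> J q n w" if "b \<in> B" for b
    unfolding word_def using labelled_word_in_J[of b n "\<lambda>i. c i b" q] block labels that \<open>0 < q\<close>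
    by auto
  moreover have "2 * w - t + 1 \<le> hdist (word b) (word b')" if "b \<in> B" "b' \<in> B" "b \<noteq> b'" for b b'
  proof -
    define I where "I = b \<inter> b'"
    define A where "A = {i\<in>I. c i b = c i b'}"
    have "finite I" "A \<subseteq> I" unfolding I_def A_def using block that by auto
    have "{i\<in>I. c i b \<noteq> c i b'} = I - A" unfolding A_def by blast
    then have "card {i\<in>I. c i b \<noteq> c i b'} = card I - card A"
      using card_Diff_subset[OF finite_subset] \<open>finite I\<close> \<open>A \<subseteq> I\<close> by metis
    moreover have "card (b - b') = w - card I" "card (b' - b) = w - card I"
      unfolding I_def using block that by (auto simp: card_Diff_subset_Int Int_commute)
    moreover have "card A \<le> card I" using card_mono[OF \<open>finite I\<close> \<open>A \<subseteq> I\<close>] .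
    moreover have "card I \<le> w"
      unfolding I_def using card_mono[OF block(3) Int_lower1] block(2) that by metis
    moreover have "card A + card I < t" using agreements that unfolding A_def I_def by blast
    moreover have "hdist (word b) (word b') =
        card (b - b') + card (b' - b) + card {i\<in>I. c i b \<noteq> c i b'}"
      unfolding word_def I_def using hdist_labelled_word block labels that by auto
    ultimately show ?thesis using \<open>t \<le> w\<close> by linarith
  qed
  ultimately have "is_code q n w (2 * w - t + 1) (card B) (word ` B)"
    unfolding is_code_def by (auto simp: card_image)
  then show ?thesis by blast
qed

lemma card_agreements_add_card_less:
  assumes "finite I" "card I < t" "inj_on anchor I"
    and "\<And>i. i \<in> I \<Longrightarrow> card (anchor i) + 1 < t"
    and "\<And>i. i \<in> I \<Longrightarrow> P i \<Longrightarrow> anchor i = I"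
  shows "card {i\<in>I. P i} + card I < t"
proof (cases "{i\<in>I. P i} = {}")
  case True
  show ?thesis using assms(2) by (simp add: True)
next
  case False
  then obtain i where "i \<in> I" "P i" by blast
  have "card {i\<in>I. P i} \<le> 1"
    using assms(1,3,5) by (auto simp: card_le_Suc0_iff_eq inj_on_def)
  moreover have "card I = card (anchor i)" using assms(5) \<open>i \<in> I\<close> \<open>P i\<close> by simp
  ultimately show ?thesis using assms(4)[OF \<open>i \<in> I\<close>] by linarith
qed

lemma exists_separating_labelling:
  fixes B :: "'a set set" and anchor :: "'a \<Rightarrow> 'a set"
  assumes "finite B"
    and chi_le: "\<And>i. i \<in> \<Union>B \<Longrightarrow> chi (derived_blocks (anchor i) B) \<le> M"
    and rest_le: "\<And>i. i \<in> \<Union>B \<Longrightarrow> card {b\<in>B. i \<in> b \<and> \<not> anchor i \<subseteq> b} \<le> K"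
  obtains c where "\<And>b i. b \<in> B \<Longrightarrow> i \<in> b \<Longrightarrow> 0 < c i b \<and> c i b \<le> M + K"
    and "\<And>b b' i. b \<in> B \<Longrightarrow> b' \<in> B \<Longrightarrow> b \<noteq> b' \<Longrightarrow> i \<in> b \<Longrightarrow> i \<in> b' \<Longrightarrow>
      c i b = c i b' \<Longrightarrow> anchor i = b \<inter> b'"
proof -
  define D where "D i = derived_blocks (anchor i) B" for i
  define E where "E i = {b\<in>B. i \<in> b \<and> \<not> anchor i \<subseteq> b}" for i
  have "finite (D i)" for i
    unfolding D_def derived_blocks_def using \<open>finite B\<close> by simp
  then have "\<forall>i. \<exists>col. (\<forall>x\<in>D i. col x < chi (D i)) \<and>
      (\<forall>x\<in>D i. \<forall>y\<in>D i. x \<noteq> y \<longrightarrow> col x = col y \<longrightarrow> x \<inter> y = {})"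
    using chi_coloring by blast
  then obtain col where col: "\<forall>i. (\<forall>x\<in>D i. col i x < chi (D i)) \<and>
      (\<forall>x\<in>D i. \<forall>y\<in>D i. x \<noteq> y \<longrightarrow> col i x = col i y \<longrightarrow> x \<inter> y = {})"
    by (auto dest: choice)
  then have col_less: "\<And>i x. x \<in> D i \<Longrightarrow> col i x < chi (D i)"
    and col_proper: "\<And>i x y. x \<in> D i \<Longrightarrow> y \<in> D i \<Longrightarrow> x \<noteq> y \<Longrightarrow> col i x = col i y \<Longrightarrow> x \<inter> y = {}"
    by auto
  have "finite (E i)" for i unfolding E_def using \<open>finite B\<close> by simp
  then have "\<forall>i. \<exists>h. bij_betw h (E i) {0..<card (E i)}" using ex_bij_betw_finite_nat by blast
  then obtain g where g: "\<And>i. bij_betw (g i) (E i) {0..<card (E i)}" by metis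
  define c where "c i b = (if anchor i \<subseteq> b then Suc (col i (b - anchor i)) else Suc (M + g i b))" for i b
  have c_inside: "c i b = Suc (col i (b - anchor i))" if "anchor i \<subseteq> b" for i b
    using that unfolding c_def by simp
  have c_outside: "c i b = Suc (M + g i b)" if "\<not> anchor i \<subseteq> b" for i b
    using that unfolding c_def by simp
  have residue: "b - anchor i \<in> D i" if "b \<in> B" "anchor i \<subseteq> b" for b i
    unfolding D_def derived_blocks_def using that by blast
  have small: "c i b \<le> M" if "b \<in> B" "i \<in> b" "anchor i \<subseteq> b" for b i
  proof -
    have "col i (b - anchor i) < chi (D i)" using col_less residue[OF that(1,3)] by blast
    moreover have "chi (D i) \<le> M" using chi_le that unfolding D_def by blast
    ultimately show ?thesis using c_inside[OF that(3)] by simp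
  qed
  have large: "M < c i b" "c i b \<le> M + K" if "b \<in> B" "i \<in> b" "\<not> anchor i \<subseteq> b" for b i
  proof -
    have "g i b < card (E i)" using bij_betwE[OF g] that unfolding E_def by auto
    moreover have "card (E i) \<le> K" using rest_le[of i] that unfolding E_def by blast
    ultimately show "M < c i b" "c i b \<le> M + K" using c_outside[OF that(3)] by simp_all
  qed
  show ?thesis
  proof (rule that)
    show "0 < c i b \<and> c i b \<le> M + K" if "b \<in> B" "i \<in> b" for b i
    proof (cases "anchor i \<subseteq> b")
      case True
      then show ?thesis using small[OF that True] c_inside[OF True] by simp
    next
      case False
      then show ?thesis using large[OF that False] by simp
    qed
  next
    fix b b' i assume b: "b \<in> B" "b' \<in> B" "b \<noteq> b'" and i: "i \<in> b" "i \<in> b'" and eq: "c i b = c i b'"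
    consider "anchor i \<subseteq> b" "anchor i \<subseteq> b'" | "\<not> anchor i \<subseteq> b" "\<not> anchor i \<subseteq> b'"
      | "anchor i \<subseteq> b \<longleftrightarrow> \<not> anchor i \<subseteq> b'" by blast
    then show "anchor i = b \<inter> b'"
    proof cases
      case 1
      then have "b - anchor i \<noteq> b' - anchor i" using b(3) by blast
      moreover have "col i (b - anchor i) = col i (b' - anchor i)"
        using eq c_inside[OF 1(1)] c_inside[OF 1(2)] by linarith
      ultimately have "(b - anchor i) \<inter> (b' - anchor i) = {}"
        by (rule col_proper[OF residue[OF b(1) 1(1)] residue[OF b(2) 1(2)]])
      then show ?thesis using 1 by blast
    next
      case 2
      then have "g i b = g i b'" using eq c_outside[OF 2(1)] c_outside[OF 2(2)] by linarith
      moreover have "b \<in> E i" "b' \<in> E i" using 2 b i unfolding E_def by auto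
      ultimately have "b = b'" using inj_onD[OF bij_betw_imp_inj_on[OF g]] by blast
      then show ?thesis using b(3) by simp
    next
      case 3
      then show ?thesis using small large b i eq by (metis not_le)
    qed
  qed
qed

lemma exists_code_from_steiner_system:
  fixes B :: "nat set set"
  assumes "3 \<le> t" "t \<le> w" "w < n" and st: "steiner_system t w n {0..<n} B"
    and chi_le: "\<And>\<alpha>. \<alpha> \<subseteq> {0..<n} \<Longrightarrow> card \<alpha> = t - 2 \<Longrightarrow> chi (derived_blocks \<alpha> B) \<le> M"
    and rest_le: "\<And>i \<alpha>. i \<in> \<alpha> \<Longrightarrow> \<alpha> \<subseteq> {0..<n} \<Longrightarrow> card \<alpha> = t - 2 \<Longrightarrow>
      card {b\<in>B. i \<in> b \<and> \<not> \<alpha> \<subseteq> b} \<le> K"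
  shows "\<exists>C. is_code (M + K + 1) n w (2 * w - t + 1) (card B) C"
proof -
  define anchor where "anchor = cyclic_window n (t - 2)"
  have window: "i \<in> anchor i" "anchor i \<subseteq> {0..<n}" "card (anchor i) = t - 2" if "i < n" for i
    using that assms self_in_cyclic_window[of "t - 2" i n] cyclic_window_subset[of n "t - 2" i]
      card_cyclic_window[of "t - 2" n i]
    unfolding anchor_def by auto
  have "inj_on anchor {0..<n}" unfolding anchor_def using assms by (intro inj_on_cyclic_window) auto
  have points: "i < n" if "i \<in> \<Union>B" for i using that steiner_systemD(3)[OF st] by fastforce
  have chi_window: "chi (derived_blocks (anchor i) B) \<le> M" if "i \<in> \<Union>B" for i
    using chi_le[OF window(2,3)[OF points[OF that]]] .
  have rest_window: "card {b\<in>B. i \<in> b \<and> \<not> anchor i \<subseteq> b} \<le> K" if "i \<in> \<Union>B" for i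
    using rest_le[OF window[OF points[OF that]]] .
  obtain c where labels: "\<And>b i. b \<in> B \<Longrightarrow> i \<in> b \<Longrightarrow> 0 < c i b \<and> c i b \<le> M + K"
    and separating: "\<And>b b' i. b \<in> B \<Longrightarrow> b' \<in> B \<Longrightarrow> b \<noteq> b' \<Longrightarrow> i \<in> b \<Longrightarrow> i \<in> b' \<Longrightarrow>
      c i b = c i b' \<Longrightarrow> anchor i = b \<inter> b'"
    using exists_separating_labelling[OF steiner_system_finite[OF st] chi_window rest_window] by blast
  show ?thesis
  proof (rule code_from_labelling[OF steiner_systemD(3,4)[OF st] \<open>t \<le> w\<close>])
    show "0 < M + K + 1" by simp
    show "0 < c i b \<and> c i b < M + K + 1" if "b \<in> B" "i \<in> b" for b i
      using labels[OF that] by simp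
    show "card {i\<in>b \<inter> b'. c i b = c i b'} + card (b \<inter> b') < t"
      if "b \<in> B" "b' \<in> B" "b \<noteq> b'" for b b'
    proof (rule card_agreements_add_card_less)
      have "b \<subseteq> {0..<n}" using steiner_systemD(3)[OF st that(1)] .
      then show "finite (b \<inter> b')" by (simp add: finite_subset)
      show "card (b \<inter> b') < t" by (rule steiner_system_card_Int_less[OF st that])
      show "inj_on anchor (b \<inter> b')"
        using \<open>inj_on anchor {0..<n}\<close> by (rule inj_on_subset) (use \<open>b \<subseteq> {0..<n}\<close> in blast)
      show "card (anchor i) + 1 < t" if "i \<in> b \<inter> b'" for i
        using window(3) \<open>b \<subseteq> {0..<n}\<close> that \<open>3 \<le> t\<close> by auto
      show "anchor i = b \<inter> b'" if "i \<in> b \<inter> b'" "c i b = c i b'" for i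
        using separating \<open>b \<in> B\<close> \<open>b' \<in> B\<close> \<open>b \<noteq> b'\<close> that by blast
    qed
  qed
qed

lemma q0'_le_max_chi:
  fixes B :: "nat set set"
  assumes "3 \<le> t" "t \<le> w" "w < n" and st: "steiner_system t w n {0..<n} B"
    and chi_le: "\<And>\<alpha>. \<alpha> \<subseteq> {0..<n} \<Longrightarrow> card \<alpha> = t - 2 \<Longrightarrow> chi (derived_blocks \<alpha> B) \<le> M"
  shows "real (q0' t w n) \<le>
    real (n - 1 choose (t - 1)) / real (w - 1 choose (t - 1))
    - real (n - t + 2 choose 2) / real (w - t + 2 choose 2) + real M + 1"
proof -
  define rest where "rest i \<alpha> = card {b\<in>B. i \<in> b \<and> \<not> \<alpha> \<subseteq> b}" for i \<alpha>
  define K where "K = rest 0 {0..<t - 2}"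
  have rest_real: "real (rest i \<alpha>) = real (n - 1 choose (t - 1)) / real (w - 1 choose (t - 1))
      - real (n - t + 2 choose 2) / real (w - t + 2 choose 2)"
    if "i \<in> \<alpha>" "\<alpha> \<subseteq> {0..<n}" "card \<alpha> = t - 2" for i \<alpha>
  proof -
    have "n - (t - 2) = n - t + 2" "t - (t - 2) = 2" "w - (t - 2) = w - t + 2" using assms by auto
    then show ?thesis
      using steiner_system_card_blocks_through_not_containing[OF st that(1,2)] that assms
      unfolding rest_def by simp
  qed
  have "real K = real (n - 1 choose (t - 1)) / real (w - 1 choose (t - 1))
      - real (n - t + 2 choose 2) / real (w - t + 2 choose 2)"
    unfolding K_def using rest_real[of 0 "{0..<t - 2}"] assms by simp
  then have "rest i \<alpha> = K" if "i \<in> \<alpha>" "\<alpha> \<subseteq> {0..<n}" "card \<alpha> = t - 2" for i \<alpha>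
    using rest_real[OF that] by simp
  then obtain C where "is_code (M + K + 1) n w (2 * w - t + 1) (card B) C"
    using exists_code_from_steiner_system[OF assms(1-4) chi_le, of K] unfolding rest_def by auto
  moreover have "card B = (n choose t) div (w choose t)"
    using steiner_system_card_blocks_containing_div[OF st, of "{}"] assms by simp
  ultimately have "q0' t w n \<le> M + K + 1" unfolding q0'_def by (auto intro: Least_le)
  then show ?thesis using \<open>real K = _\<close> by simp
qed

theorem mainTheorem12:
  fixes t w n :: nat
  assumes "3 \<le> t" and "t \<le> w" and "w < n"
    and "\<exists>B :: nat set set. steiner_system t w n {0..<n} B"
  shows "real (q0' t w n) \<le>
    real (n - 1 choose (t - 1)) / real (w - 1 choose (t - 1))
    - real (n - t + 2 choose 2) / real (w - t + 2 choose 2)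
    + real (Min {Max {chi (derived_blocks \<alpha> B) | \<alpha>. \<alpha> \<subseteq> {0..<n} \<and> card \<alpha> = t - 2}
                 | B :: nat set set. steiner_system t w n {0..<n} B})
    + 1"
proof -
  define X where "X B = {chi (derived_blocks \<alpha> B) | \<alpha>. \<alpha> \<subseteq> {0..<n} \<and> card \<alpha> = t - 2}"
    for B :: "nat set set"
  define S where "S = {B :: nat set set. steiner_system t w n {0..<n} B}"
  have "finite S"
    using finite_subset[of S "Pow (Pow {0..<n})"] unfolding S_def steiner_system_def by auto
  moreover have "S \<noteq> {}" using assms(4) unfolding S_def by blast
  ultimately obtain B where "B \<in> S" and B_min: "Min ((\<lambda>B. Max (X B)) ` S) = Max (X B)"
    using Min_in[of "(\<lambda>B. Max (X B)) ` S"] by fastforce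
  have "finite (X B)"
    unfolding X_def by (rule finite_image_set, rule finite_subset[of _ "Pow {0..<n}"]) auto
  then have "chi (derived_blocks \<alpha> B) \<le> Max (X B)" if "\<alpha> \<subseteq> {0..<n}" "card \<alpha> = t - 2" for \<alpha>
    using that unfolding X_def by (auto intro: Max_ge)
  then have "real (q0' t w n) \<le> real (n - 1 choose (t - 1)) / real (w - 1 choose (t - 1))
      - real (n - t + 2 choose 2) / real (w - t + 2 choose 2) + real (Max (X B)) + 1"
    using q0'_le_max_chi[OF assms(1-3)] \<open>B \<in> S\<close> unfolding S_def by blast
  moreover have "{Max (X B) | B :: nat set set. steiner_system t w n {0..<n} B} = (\<lambda>B. Max (X B)) ` S"
    unfolding S_def by blast
  ultimately show ?thesis using B_min unfolding X_def by simp
qed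

end
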